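(* Let $\mathbb{F}=\mathbb{F}_p$, $r_1,\dots,r_n\in\mathbb{F}^N$ and $k\in[N]$. Then $$\mathcal{S}^{\{k\}}(r_1,\dots,r_n)=\sum_{\tau\subseteq[n]}(-1)^{|\tau|}\,|\tau|!\; r_\tau(k)\;\mathcal{S}\big(r[[n]\setminus\tau]\big).$$
   Context: For vectors $w_1,\dots,w_L\in\mathbb{F}^N$ and $T\subseteq[N]$, $\mathcal{S}^T(w_1,\dots,w_L)=\sum_\rho\prod_{i=1}^Lw_i(\rho(i))$ over injective maps $\rho:[L]\to[N]\setminus T$ (sum of permanents of all $L\times L$ submatrices avoiding columns in $T$), and $\mathcal{S}=\mathcal{S}^{\emptyset}$. For $\tau\subseteq[n]$, $r_\tau$ is the coordinatewise product $\prod_{i\in\tau}r_i$, with $r_\emptyset$ the all-ones vector; $r[\sigma]$ denotes the list of vectors $r_i$, $i\in\sigma$, and $\mathcal{S}(r[\emptyset])=1$. $r(j)$ is the $j$-th coordinate. *)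

theory Defs
  imports "HOL-Library.FuncSet" "Berlekamp_Zassenhaus.Finite_Field"
begin

text \<open>Vectors in F^N are functions nat => F, coordinates indexed by [N] = {1..N}.
  A family of vectors r_i (i in a finite index set sigma) is given by r :: nat => nat => F.
  permsum N T sigma r = sum over injective rho : sigma -> [N] - T of prod_{i in sigma} r i (rho i),
  i.e. S^T(r[sigma]).\<close>

definition permsum :: "nat \<Rightarrow> nat set \<Rightarrow> nat set \<Rightarrow> (nat \<Rightarrow> nat \<Rightarrow> 'a::comm_ring_1) \<Rightarrow> 'a" where
  "permsum N T \<sigma> r =
     (\<Sum>\<rho> \<in> {\<rho>. \<rho> \<in> \<sigma> \<rightarrow>\<^sub>E ({1..N} - T) \<and> inj_on \<rho> \<sigma>}. \<Prod>i\<in>\<sigma>. r i (\<rho> i))"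

definition rprod :: "(nat \<Rightarrow> nat \<Rightarrow> 'a::comm_ring_1) \<Rightarrow> nat set \<Rightarrow> nat \<Rightarrow> 'a" where
  "rprod r \<tau> j = (\<Prod>i\<in>\<tau>. r i j)"

end

theory Submission
  imports Defs
begin

text \<open>Sorting the injections \<rho> : \<sigma> \<rightarrow> [N] - T by which index i, if any, is sent to the
  column k gives S^T(\<sigma>) = S^(T \<union> {k})(\<sigma>) + \<Sum>_{i \<in> \<sigma>} r_i(k) S^(T \<union> {k})(\<sigma> - {i}).
  The formula inverts this recursion by strong induction on \<sigma>: substituting it for
  S^(T \<union> {k})(\<sigma> - {i}) turns the sum over i into a sum over nonempty \<tau> \<subseteq> \<sigma> in which each \<tau>
  arises |\<tau>| times, once for each of its elements, and |\<tau>| (-1)^(|\<tau>|-1) (|\<tau>|-1)! = -(-1)^|\<tau>| |\<tau>|!.\<close>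

definition injections :: "nat \<Rightarrow> nat set \<Rightarrow> nat set \<Rightarrow> (nat \<Rightarrow> nat) set" where
  "injections N T \<sigma> = {\<rho>. \<rho> \<in> \<sigma> \<rightarrow>\<^sub>E ({1..N} - T) \<and> inj_on \<rho> \<sigma>}"

lemma permsum_eq_sum_injections:
  "permsum N T \<sigma> r = (\<Sum>\<rho>\<in>injections N T \<sigma>. \<Prod>i\<in>\<sigma>. r i (\<rho> i))"
  unfolding permsum_def injections_def ..

lemma finite_injections: "finite \<sigma> \<Longrightarrow> finite (injections N T \<sigma>)"
  unfolding injections_def
  by (rule finite_subset[OF _ finite_PiE[of \<sigma> "\<lambda>_. {1..N} - T"]]) auto

lemma injections_fiber:
  assumes "i \<in> \<sigma>" "k \<in> {1..N} - T"
  shows "{\<rho>\<in>injections N T \<sigma>. \<rho> i = k} = (\<lambda>\<rho>. \<rho>(i:=k)) ` injections N (insert k T) (\<sigma>-{i})"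
proof (intro equalityI subsetI)
  fix \<rho> assume "\<rho> \<in> {\<rho>\<in>injections N T \<sigma>. \<rho> i = k}"
  then have \<rho>: "\<rho> \<in> \<sigma> \<rightarrow>\<^sub>E ({1..N} - T)" "inj_on \<rho> \<sigma>" "\<rho> i = k"
    unfolding injections_def by auto
  have "\<rho>(i:=undefined) \<in> injections N (insert k T) (\<sigma>-{i})"
    using \<rho> assms(1) unfolding injections_def inj_on_def PiE_def Pi_def extensional_def by auto
  moreover have "\<rho> = (\<rho>(i:=undefined))(i:=k)" using \<rho>(3) by (simp add: fun_upd_idem)
  ultimately show "\<rho> \<in> (\<lambda>\<rho>. \<rho>(i:=k)) ` injections N (insert k T) (\<sigma>-{i})" by blast
next
  fix \<rho> assume "\<rho> \<in> (\<lambda>\<rho>. \<rho>(i:=k)) ` injections N (insert k T) (\<sigma>-{i})"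
  then obtain \<rho>' where "\<rho> = \<rho>'(i:=k)" "\<rho>' \<in> (\<sigma>-{i}) \<rightarrow>\<^sub>E ({1..N} - insert k T)"
      "inj_on \<rho>' (\<sigma>-{i})"
    unfolding injections_def by blast
  then show "\<rho> \<in> {\<rho>\<in>injections N T \<sigma>. \<rho> i = k}"
    using assms unfolding injections_def inj_on_def PiE_def Pi_def extensional_def by auto
qed

lemma inj_on_update_injections:
  "inj_on (\<lambda>\<rho>. \<rho>(i:=k)) (injections N T (\<sigma>-{i}))"
proof (rule inj_onI)
  fix \<rho> \<rho>' assume "\<rho> \<in> injections N T (\<sigma>-{i})" "\<rho>' \<in> injections N T (\<sigma>-{i})"
    and upd: "\<rho>(i:=k) = \<rho>'(i:=k)"
  then have "\<rho> i = \<rho>' i" unfolding injections_def by (auto dest!: PiE_arb[where x=i])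
  with upd show "\<rho> = \<rho>'" by (metis fun_upd_triv fun_upd_upd)
qed

lemma permsum_split_column:
  assumes "finite \<sigma>" and k: "k \<in> {1..N} - T"
  shows "permsum N T \<sigma> r = permsum N (insert k T) \<sigma> r
           + (\<Sum>i\<in>\<sigma>. r i k * permsum N (insert k T) (\<sigma>-{i}) r)"
proof -
  define P where "P \<rho> = (\<Prod>i\<in>\<sigma>. r i (\<rho> i))" for \<rho>
  have hit_once: "(\<Sum>i\<in>\<sigma>. if \<rho> i = k then P \<rho> else 0) = (if k \<in> \<rho> ` \<sigma> then P \<rho> else 0)"
    if "\<rho> \<in> injections N T \<sigma>" for \<rho>
  proof (cases "k \<in> \<rho> ` \<sigma>")
    case True
    then obtain i where "i \<in> \<sigma>" "\<rho> i = k" by auto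
    with that have "{j\<in>\<sigma>. \<rho> j = k} = {i}" unfolding injections_def inj_on_def by auto
    with True show ?thesis using assms(1) by (simp add: sum.inter_filter[symmetric])
  qed (auto intro!: sum.neutral)
  have avoid_k: "{\<rho>\<in>injections N T \<sigma>. k \<notin> \<rho> ` \<sigma>} = injections N (insert k T) \<sigma>"
    unfolding injections_def PiE_def Pi_def by auto
  have fiber: "(\<Sum>\<rho>\<in>injections N T \<sigma>. if \<rho> i = k then P \<rho> else 0)
      = r i k * permsum N (insert k T) (\<sigma>-{i}) r" if i: "i \<in> \<sigma>" for i
  proof -
    have "(\<Sum>\<rho>\<in>injections N T \<sigma>. if \<rho> i = k then P \<rho> else 0)
        = (\<Sum>\<rho>\<in>injections N (insert k T) (\<sigma>-{i}). P (\<rho>(i:=k)))"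
      unfolding sum.inter_filter[OF finite_injections[OF assms(1)], symmetric] injections_fiber[OF i k]
      by (simp add: sum.reindex[OF inj_on_update_injections])
    also have "\<dots> = (\<Sum>\<rho>\<in>injections N (insert k T) (\<sigma>-{i}). r i k * (\<Prod>j\<in>\<sigma>-{i}. r j (\<rho> j)))"
      unfolding P_def using assms(1) i by (auto simp: prod.remove intro!: sum.cong prod.cong)
    finally show ?thesis by (simp add: permsum_eq_sum_injections sum_distrib_left)
  qed
  have "permsum N T \<sigma> r = (\<Sum>\<rho>\<in>injections N T \<sigma>. (if k \<notin> \<rho> ` \<sigma> then P \<rho> else 0)
      + (\<Sum>i\<in>\<sigma>. if \<rho> i = k then P \<rho> else 0))"
    unfolding permsum_eq_sum_injections P_def[symmetric] by (rule sum.cong) (simp_all add: hit_once)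
  also have "\<dots> = permsum N (insert k T) \<sigma> r
      + (\<Sum>\<rho>\<in>injections N T \<sigma>. \<Sum>i\<in>\<sigma>. if \<rho> i = k then P \<rho> else 0)"
    using finite_injections[OF assms(1)]
    by (simp add: sum.distrib sum.inter_filter[symmetric] avoid_k permsum_eq_sum_injections P_def)
  also have "(\<Sum>\<rho>\<in>injections N T \<sigma>. \<Sum>i\<in>\<sigma>. if \<rho> i = k then P \<rho> else 0)
      = (\<Sum>i\<in>\<sigma>. r i k * permsum N (insert k T) (\<sigma>-{i}) r)"
    by (subst sum.swap) (simp add: fiber)
  finally show ?thesis .
qed

lemma sum_Pow_insert_eq_card_weighted:
  fixes f :: "'a set \<Rightarrow> 'b::comm_semiring_1"
  assumes "finite \<sigma>"
  shows "(\<Sum>i\<in>\<sigma>. \<Sum>\<tau>\<in>Pow (\<sigma>-{i}). f (insert i \<tau>)) = (\<Sum>\<tau>\<in>Pow \<sigma>. of_nat (card \<tau>) * f \<tau>)"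
proof -
  have containing_i: "(\<Sum>\<tau>\<in>Pow (\<sigma>-{i}). f (insert i \<tau>)) = (\<Sum>\<tau>\<in>Pow \<sigma>. if i \<in> \<tau> then f \<tau> else 0)"
    if "i \<in> \<sigma>" for i
  proof -
    have "insert i ` Pow (\<sigma>-{i}) = {\<tau>\<in>Pow \<sigma>. i \<in> \<tau>}"
    proof
      show "{\<tau>\<in>Pow \<sigma>. i \<in> \<tau>} \<subseteq> insert i ` Pow (\<sigma>-{i})"
      proof
        fix \<tau> assume "\<tau> \<in> {\<tau>\<in>Pow \<sigma>. i \<in> \<tau>}"
        then have "\<tau> = insert i (\<tau>-{i})" "\<tau>-{i} \<in> Pow (\<sigma>-{i})" by auto
        then show "\<tau> \<in> insert i ` Pow (\<sigma>-{i})" by blast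
      qed
    qed (use that in auto)
    moreover have "inj_on (insert i) (Pow (\<sigma>-{i}))"
      by (auto simp: inj_on_def)
    ultimately have "(\<Sum>\<tau>\<in>Pow (\<sigma>-{i}). f (insert i \<tau>)) = (\<Sum>\<tau>\<in>{\<tau>\<in>Pow \<sigma>. i \<in> \<tau>}. f \<tau>)"
      using sum.reindex[of "insert i" "Pow (\<sigma>-{i})" f] by (simp add: comp_def)
    also have "\<dots> = (\<Sum>\<tau>\<in>Pow \<sigma>. if i \<in> \<tau> then f \<tau> else 0)"
      using assms by (intro sum.inter_filter) simp
    finally show ?thesis .
  qed
  have "(\<Sum>i\<in>\<sigma>. \<Sum>\<tau>\<in>Pow (\<sigma>-{i}). f (insert i \<tau>)) = (\<Sum>i\<in>\<sigma>. \<Sum>\<tau>\<in>Pow \<sigma>. if i \<in> \<tau> then f \<tau> else 0)"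
    using containing_i by (rule sum.cong[OF refl])
  also have "\<dots> = (\<Sum>\<tau>\<in>Pow \<sigma>. \<Sum>i\<in>\<sigma>. if i \<in> \<tau> then f \<tau> else 0)"
    by (rule sum.swap)
  also have "\<dots> = (\<Sum>\<tau>\<in>Pow \<sigma>. of_nat (card \<tau>) * f \<tau>)"
  proof (rule sum.cong[OF refl])
    fix \<tau> assume "\<tau> \<in> Pow \<sigma>"
    then have "{i\<in>\<sigma>. i \<in> \<tau>} = \<tau>" by auto
    with assms show "(\<Sum>i\<in>\<sigma>. if i \<in> \<tau> then f \<tau> else 0) = of_nat (card \<tau>) * f \<tau>"
      by (simp add: sum.inter_filter[symmetric])
  qed
  finally show ?thesis .
qed

lemma permsum_insert_column_inversion:
  fixes r :: "nat \<Rightarrow> nat \<Rightarrow> 'a::comm_ring_1"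
  assumes "finite \<sigma>" and k: "k \<in> {1..N} - T"
  shows "permsum N (insert k T) \<sigma> r = (\<Sum>\<tau>\<in>Pow \<sigma>. (-1) ^ card \<tau> * of_nat (fact (card \<tau>))
           * rprod r \<tau> k * permsum N T (\<sigma> - \<tau>) r)"
  using assms(1)
proof (induction \<sigma> rule: finite_psubset_induct)
  case (psubset \<sigma>)
  define t where "t \<tau> = (-1) ^ card \<tau> * of_nat (fact (card \<tau>)) * rprod r \<tau> k * permsum N T (\<sigma> - \<tau>) r"
    for \<tau>
  define g where "g \<tau> = (-1) ^ (card \<tau> - 1) * of_nat (fact (card \<tau> - 1)) * rprod r \<tau> k
    * permsum N T (\<sigma> - \<tau>) r" for \<tau>
  have expand_IH: "r i k * permsum N (insert k T) (\<sigma>-{i}) r = (\<Sum>\<tau>\<in>Pow (\<sigma>-{i}). g (insert i \<tau>))"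
    if i: "i \<in> \<sigma>" for i
  proof -
    have "g (insert i \<tau>) = r i k * ((-1) ^ card \<tau> * of_nat (fact (card \<tau>)) * rprod r \<tau> k
      * permsum N T (\<sigma> - {i} - \<tau>) r)" if "\<tau> \<in> Pow (\<sigma>-{i})" for \<tau>
    proof -
      from that have "finite \<tau>" "i \<notin> \<tau>" using psubset.hyps(1) finite_subset by auto
      moreover have "\<sigma> - insert i \<tau> = \<sigma> - {i} - \<tau>" by auto
      ultimately show ?thesis by (simp add: g_def rprod_def algebra_simps)
    qed
    moreover have "\<sigma> - {i} \<subset> \<sigma>" using i by auto
    ultimately show ?thesis
      using psubset.IH by (simp add: sum_distrib_left)
  qed
  have card_g: "of_nat (card \<tau>) * g \<tau> = (if \<tau> = {} then 0 else - t \<tau>)" if "\<tau> \<in> Pow \<sigma>" for \<tau>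
  proof (cases "\<tau> = {}")
    case False
    with that psubset.hyps(1) obtain m where "card \<tau> = Suc m"
      by (metis Pow_iff card_gt_0_iff finite_subset gr0_implies_Suc)
    then show ?thesis using False by (simp add: g_def t_def algebra_simps)
  qed simp
  have "permsum N (insert k T) \<sigma> r
      = t {} - (\<Sum>i\<in>\<sigma>. r i k * permsum N (insert k T) (\<sigma>-{i}) r)"
    using permsum_split_column[OF psubset.hyps(1) k, of r] by (simp add: t_def rprod_def)
  also have "(\<Sum>i\<in>\<sigma>. r i k * permsum N (insert k T) (\<sigma>-{i}) r) = (\<Sum>\<tau>\<in>Pow \<sigma>. of_nat (card \<tau>) * g \<tau>)"
    by (simp add: expand_IH sum_Pow_insert_eq_card_weighted[OF psubset.hyps(1)])
  also have "\<dots> = (\<Sum>\<tau>\<in>Pow \<sigma>. if \<tau> = {} then 0 else - t \<tau>)"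
    by (rule sum.cong[OF refl]) (rule card_g)
  also have "\<dots> = - (\<Sum>\<tau>\<in>Pow \<sigma> - {{}}. t \<tau>)"
    using psubset.hyps(1) by (auto simp: sum.remove[of "Pow \<sigma>" "{}"] sum_negf intro!: sum.cong)
  also have "t {} - - (\<Sum>\<tau>\<in>Pow \<sigma> - {{}}. t \<tau>) = (\<Sum>\<tau>\<in>Pow \<sigma>. t \<tau>)"
    using psubset.hyps(1) by (simp add: sum.remove[of "Pow \<sigma>" "{}"])
  finally show ?case unfolding t_def .
qed

theorem lemma2p5:
  fixes r :: "nat \<Rightarrow> nat \<Rightarrow> 'p::prime_card mod_ring"
    and n N k :: nat
  assumes "k \<in> {1..N}"
  shows "permsum N {k} {1..n} r =
    (\<Sum>\<tau> \<in> Pow {1..n}. (-1) ^ card \<tau> * of_nat (fact (card \<tau>)) * rprod r \<tau> k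
        * permsum N {} ({1..n} - \<tau>) r)"
  using permsum_insert_column_inversion[of "{1..n}" k N "{}" r] assms by simp

end
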